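(* Under the standing assumptions below, let $P\in M_2(\mathbb C)$ be a rank-one idempotent with $\theta(S_1)\subseteq\overline B_P(12\delta)\cup\overline B_{I-P}(12\delta)$, and set $S_p=\theta^{-1}(\overline B_P(12\delta))$, $S_q=\theta^{-1}(\overline B_{I-P}(12\delta))$. Let $e\in S_2$. If $f\in S_p$ then $ef\in S_p$; if $f\in S_q$ then $ef\in S_q$.
   Context: Standing assumptions: $S$ is a semilattice (commutative semigroup of idempotents), $0\le\delta<0.03$, and $\theta:S\to M_2(\mathbb C)$ satisfies $\|\theta(e)\theta(f)-\theta(ef)\|_{HS}\le\delta$ for all $e,f\in S$, where $\|A\|_{HS}=(\operatorname{tr}(A^*A))^{1/2}$. For $k\in\{0,1,2\}$, $S_k=\{x\in S:\ |\operatorname{tr}\theta(x)-k|<0.95\}$; these sets are pairwise disjoint and cover $S$. $\overline B_A(r)=\{B\in M_2(\mathbb C):\|A-B\|_{HS}\le r\}$. *)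

theory Defs
  imports "HOL-Analysis.Analysis"
begin

type_synonym cmat2 = "complex^2^2"

definition adj2 :: "cmat2 \<Rightarrow> cmat2" where
  "adj2 A = (\<chi> i j. cnj (A $ j $ i))"

definition hs_norm :: "cmat2 \<Rightarrow> real" where
  "hs_norm A = sqrt (Re (trace (adj2 A ** A)))"

definition closed_hs_ball :: "cmat2 \<Rightarrow> real \<Rightarrow> cmat2 set" where
  "closed_hs_ball A r = {B. hs_norm (A - B) \<le> r}"

definition Sk :: "('a \<Rightarrow> cmat2) \<Rightarrow> nat \<Rightarrow> 'a set" where
  "Sk \<theta> k = {x. cmod (trace (\<theta> x) - of_nat k) < 0.95}"

end

theory Submission
  imports Defs
begin

(* Identify the Hilbert-Schmidt norm with the Euclidean norm of complex^2^2
   and collect the 2x2 facts needed: submultiplicativity, |tr A| <= sqrt 2 |A|, and a bound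
   on the discriminant (tr R)^2 - 4 det R by 2|R|^2.
   For an almost idempotent X (|X^2 - X| <= delta) with u = tr X - 1 and tau = tr (X^2 - X),
   the discriminant of X^2 - X equals u^2 (1 - u^2 + 2 tau); a scalar analysis of this
   quantity shows that tr X lies within 0.95 of 0, 1 or 2, and Cayley-Hamilton then gives
   |X - I| <= 5 delta when tr X is near 2 (and |X| <= 5 delta when tr X is near 0).
   A rank-one idempotent Q has tr Q = 1 and det Q = 0, hence |Q| = |I - Q| >= 1 and
   |I - 2Q| >= sqrt 2 |Q|.
   Main step: if theta(e) is within 5 delta of I and theta(f) within 12 delta of Q, then
   G = theta(ef) is almost idempotent; the cases "tr G near 0", "tr G near 2" and
   "G near I - Q" are each contradictory, so G lies within 12 delta of Q.  The theorem is
   this step applied to Q = P and to Q = I - P. *)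

text \<open>Decimal bounds on sqrt 2, which turn the norm estimates into linear arithmetic.\<close>

lemma sqrt2_upper: "sqrt 2 \<le> 14143/10000"
proof -
  have "sqrt 2 \<le> sqrt ((14143/10000)^2)"
    by (intro real_sqrt_le_mono) (simp add: power2_eq_square)
  then show ?thesis by simp
qed

lemma sqrt2_lower: "14142/10000 \<le> sqrt 2"
  by (rule real_le_rsqrt) (simp add: power2_eq_square)

lemma cmat2_eq_iff:
  "(A::cmat2) = B \<longleftrightarrow> A$1$1 = B$1$1 \<and> A$1$2 = B$1$2 \<and> A$2$1 = B$2$1 \<and> A$2$2 = B$2$2"
  by (auto simp: vec_eq_iff forall_2)

lemma cmat2_mult_entry: "((A::cmat2) ** B)$i$j = A$i$1 * B$1$j + A$i$2 * B$2$j"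
  by (simp add: matrix_matrix_mult_def sum_2)

lemma cmat2_trace: "trace (A::cmat2) = A$1$1 + A$2$2"
  by (simp add: trace_def sum_2)

lemma cmat2_mat_entry: "(mat c :: cmat2)$i$j = (if i = j then c else 0)"
  by (simp add: mat_def)

definition det2 :: "cmat2 \<Rightarrow> complex" where
  "det2 A = A$1$1 * A$2$2 - A$1$2 * A$2$1"

lemma cmat2_norm_sq:
  "(norm (A::cmat2))^2 = (cmod (A$1$1))^2 + (cmod (A$1$2))^2 + (cmod (A$2$1))^2 + (cmod (A$2$2))^2"
  by (simp add: norm_vec_def L2_set_def sum_2)

lemma hs_norm_eq_norm: "hs_norm A = norm A"
proof -
  have "Re (trace (adj2 A ** A)) = (norm A)^2"
    unfolding cmat2_norm_sq cmod_power2
    by (simp add: adj2_def cmat2_trace cmat2_mult_entry power2_eq_square algebra_simps)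
  then show ?thesis by (simp add: hs_norm_def)
qed

text \<open>Norm estimates for 2x2 matrices: Cauchy-Schwarz for a row times a column gives
  submultiplicativity of the Hilbert-Schmidt norm.\<close>

lemma cmod_dot2_sq_le:
  "(cmod (x1*y1 + x2*y2))^2 \<le> ((cmod x1)^2 + (cmod x2)^2) * ((cmod y1)^2 + (cmod y2)^2)"
proof -
  have "cmod (x1*y1 + x2*y2) \<le> cmod x1 * cmod y1 + cmod x2 * cmod y2"
    by (metis norm_mult norm_triangle_ineq)
  then have "(cmod (x1*y1 + x2*y2))^2 \<le> (cmod x1 * cmod y1 + cmod x2 * cmod y2)^2"
    by (simp add: power_mono)
  also have "\<dots> \<le> ((cmod x1)^2 + (cmod x2)^2) * ((cmod y1)^2 + (cmod y2)^2)"
  proof -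
    have "0 \<le> (cmod x1 * cmod y2 - cmod x2 * cmod y1)^2" by simp
    then show ?thesis by (simp add: power2_eq_square algebra_simps)
  qed
  finally show ?thesis .
qed

lemma norm_cmat2_mult_le: "norm ((A::cmat2) ** (B::cmat2)) \<le> norm A * norm B"
proof -
  have "(norm (A ** B))^2 \<le>
      ((cmod (A$1$1))^2 + (cmod (A$1$2))^2) * ((cmod (B$1$1))^2 + (cmod (B$2$1))^2)
    + ((cmod (A$1$1))^2 + (cmod (A$1$2))^2) * ((cmod (B$1$2))^2 + (cmod (B$2$2))^2)
    + ((cmod (A$2$1))^2 + (cmod (A$2$2))^2) * ((cmod (B$1$1))^2 + (cmod (B$2$1))^2)
    + ((cmod (A$2$1))^2 + (cmod (A$2$2))^2) * ((cmod (B$1$2))^2 + (cmod (B$2$2))^2)"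
    unfolding cmat2_norm_sq cmat2_mult_entry by (intro add_mono cmod_dot2_sq_le)
  also have "\<dots> = (norm A * norm B)^2"
    unfolding power_mult_distrib cmat2_norm_sq by (simp only: algebra_simps)
  finally show ?thesis by (rule power2_le_imp_le) simp
qed

lemma cmod_trace_le: "cmod (trace (A::cmat2)) \<le> sqrt 2 * norm A"
proof -
  have "(cmod (trace A))^2 \<le> (cmod (A$1$1) + cmod (A$2$2))^2"
    unfolding cmat2_trace by (simp add: power_mono norm_triangle_ineq)
  also have "\<dots> \<le> 2 * (norm A)^2"
  proof -
    have "0 \<le> (cmod (A$1$1) - cmod (A$2$2))^2" by simp
    then have "(cmod (A$1$1) + cmod (A$2$2))^2 \<le> 2 * (cmod (A$1$1))^2 + 2 * (cmod (A$2$2))^2"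
      by (simp add: power2_eq_square algebra_simps)
    moreover have "0 \<le> (cmod (A$1$2))^2" "0 \<le> (cmod (A$2$1))^2" by simp_all
    ultimately show ?thesis unfolding cmat2_norm_sq distrib_left by linarith
  qed
  also have "\<dots> = (sqrt 2 * norm A)^2" by (simp add: power_mult_distrib)
  finally show ?thesis by (rule power2_le_imp_le) simp
qed

lemma norm_cmat2_scalar: "norm (mat c :: cmat2) = sqrt 2 * cmod c"
proof -
  have "(norm (mat c :: cmat2))^2 = (sqrt 2 * cmod c)^2"
    unfolding cmat2_norm_sq by (simp add: mat_def power_mult_distrib)
  then show ?thesis by (simp add: power2_eq_iff_nonneg)
qed

lemma norm_cmat2_entrywise_scale:
  assumes "\<And>i j. Y$i$j = c * Z$i$j"
  shows "norm (Y::cmat2) = cmod c * norm (Z::cmat2)"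
proof -
  have "(norm Y)^2 = (cmod c * norm Z)^2"
    unfolding cmat2_norm_sq power_mult_distrib assms norm_mult by (simp only: algebra_simps)
  then show ?thesis by (simp add: power2_eq_iff_nonneg)
qed

lemma cmod_discriminant_le: "cmod ((trace R)^2 - 4 * det2 R) \<le> 2 * (norm R)^2"
proof -
  have disc: "(trace R)^2 - 4 * det2 R = (R$1$1 - R$2$2)^2 + 4 * (R$1$2 * R$2$1)"
    unfolding cmat2_trace det2_def by (simp add: power2_eq_square algebra_simps)
  have "cmod ((R$1$1 - R$2$2)^2 + 4 * (R$1$2 * R$2$1))
      \<le> (cmod (R$1$1 - R$2$2))^2 + 4 * (cmod (R$1$2) * cmod (R$2$1))"
    using norm_triangle_ineq[of "(R$1$1 - R$2$2)^2" "4 * (R$1$2 * R$2$1)"]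
    by (simp add: norm_mult norm_power)
  also have "\<dots> \<le> (cmod (R$1$1) + cmod (R$2$2))^2 + 4 * (cmod (R$1$2) * cmod (R$2$1))"
    by (simp add: power_mono norm_triangle_ineq4)
  also have "\<dots> \<le> 2 * (norm R)^2"
  proof -
    have "0 \<le> (cmod (R$1$1) - cmod (R$2$2))^2" "0 \<le> (cmod (R$1$2) - cmod (R$2$1))^2"
      by simp_all
    then show ?thesis unfolding cmat2_norm_sq by (simp add: power2_eq_square algebra_simps)
  qed
  finally show ?thesis using disc by simp
qed

lemma defect_discriminant:
  fixes X :: cmat2
  defines "R \<equiv> X ** X - X" and "u \<equiv> trace X - 1"
  shows "(trace R)^2 - 4 * det2 R = u^2 * (1 - u^2 + 2 * trace R)"
  unfolding R_def u_def
  by (simp add: cmat2_trace det2_def cmat2_mult_entry power2_eq_square algebra_simps)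

lemma defect_cayley_hamilton:
  fixes X :: cmat2
  shows "(X ** X - X + mat (det2 X - trace X + 1))$i$j = (trace X - 1) * (X - mat 1)$i$j"
  using exhaust_2[of i] exhaust_2[of j]
  by (auto simp: cmat2_trace det2_def cmat2_mult_entry cmat2_mat_entry algebra_simps)

lemma defect_constant_term:
  fixes X :: cmat2
  defines "u \<equiv> trace X - 1"
  shows "2 * (det2 X - trace X + 1) = (u - 1)^2 + (u - 1) - trace (X ** X - X)"
  unfolding u_def
  by (simp add: cmat2_trace det2_def cmat2_mult_entry power2_eq_square algebra_simps)

lemma small_tau_bound:
  fixes \<tau> :: complex and \<delta> :: real
  assumes "0 \<le> \<delta>" "\<delta> < 3/100" and "cmod \<tau> \<le> sqrt 2 * \<delta>"
  shows "cmod \<tau> \<le> 4243/100000"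
proof -
  have "sqrt 2 * \<delta> \<le> (14143/10000) * (3/100)"
    using sqrt2_upper assms(1,2) by (intro mult_mono) auto
  then show ?thesis using assms(3) by simp
qed

lemma perturbed_factor_bounds:
  fixes u \<tau> :: complex
  shows "cmod (1 - u^2 + 2*\<tau>) \<ge> cmod (u - 1) * cmod (u + 1) - 2 * cmod \<tau>"
    and "cmod (1 - u^2 + 2*\<tau>) \<ge> 1 - cmod u * cmod u - 2 * cmod \<tau>"
proof -
  have factor: "1 - u^2 = - ((u - 1) * (u + 1))" by (simp add: power2_eq_square algebra_simps)
  have "cmod (1 - u^2 + 2*\<tau>) \<ge> cmod (1 - u^2) - cmod (2*\<tau>)"
    by (metis norm_diff_ineq diff_minus_eq_add)
  then show lower: "cmod (1 - u^2 + 2*\<tau>) \<ge> cmod (u - 1) * cmod (u + 1) - 2 * cmod \<tau>"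
    by (simp add: factor norm_mult)
  have "cmod (u - 1) * cmod (u + 1) = cmod (1 - u^2)" by (simp add: factor norm_mult)
  also have "\<dots> \<ge> 1 - cmod u * cmod u"
    using norm_triangle_ineq2[of 1 "u^2"] by (simp add: norm_mult power2_eq_square)
  finally show "cmod (1 - u^2 + 2*\<tau>) \<ge> 1 - cmod u * cmod u - 2 * cmod \<tau>"
    using lower by linarith
qed

lemma scalar_trichotomy:
  fixes u \<tau> :: complex and \<delta> :: real
  assumes d: "0 \<le> \<delta>" "\<delta> < 3/100" and tau: "cmod \<tau> \<le> sqrt 2 * \<delta>"
    and disc: "cmod (u^2 * (1 - u^2 + 2*\<tau>)) \<le> 2 * \<delta>^2"
  shows "cmod (u + 1) < 19/20 \<or> cmod u < 19/20 \<or> cmod (u - 1) < 19/20"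
proof (rule ccontr)
  assume far: "\<not> ?thesis"
  note B = small_tau_bound[OF d tau] perturbed_factor_bounds[of u \<tau>]
  have "cmod u * cmod u \<ge> (19/20) * (19/20)" using far by (intro mult_mono) auto
  moreover have "cmod (u - 1) * cmod (u + 1) \<ge> (19/20) * (19/20)" using far by (intro mult_mono) auto
  then have "cmod (1 - u^2 + 2*\<tau>) \<ge> 4/5" using B(1,2) by linarith
  ultimately have "cmod u * cmod u * cmod (1 - u^2 + 2*\<tau>) \<ge> (361/400) * (4/5)"
    by (intro mult_mono) auto
  moreover have "\<delta>^2 \<le> (3/100)^2" using d by (intro power_mono) auto
  ultimately show False using disc by (simp add: norm_mult power2_eq_square)
qed

lemma scalar_root_near_one:
  fixes u \<tau> :: complex and \<delta> :: real
  assumes d: "0 \<le> \<delta>" "\<delta> < 3/100" and tau: "cmod \<tau> \<le> sqrt 2 * \<delta>"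
    and disc: "cmod (u^2 * (1 - u^2 + 2*\<tau>)) \<le> 2 * \<delta>^2"
    and near: "cmod (u - 1) < 19/20"
  shows "cmod (u - 1) \<le> 57/20 * \<delta>"
proof -
  note B = small_tau_bound[OF d tau] perturbed_factor_bounds[of u \<tau>]
  define x where "x = cmod u * cmod u"
  define y where "y = cmod \<tau>"
  define c where "c = cmod (1 - u^2 + 2*\<tau>)"
  have xc: "x * c \<le> 2 * \<delta>^2" using disc by (simp add: x_def c_def norm_mult power2_eq_square)
  have y: "y \<le> 4243/100000" "0 \<le> y" using B(1) by (auto simp: y_def)
  have c: "c \<ge> 1 - x - 2*y" using B(3) by (simp add: x_def y_def c_def)
  text \<open>First |u|^2 >= 1/2: otherwise x (1 - x - 2y) <= x c would exceed 2 delta^2.\<close>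
  have "cmod u \<ge> 1/20"
    using norm_triangle_ineq2[of 1 "1 - u"] near by (simp add: norm_minus_commute)
  then have x_pos: "x \<ge> 1/400" unfolding x_def using mult_mono[of "1/20" "cmod u" "1/20" "cmod u"] by simp
  have x_half: "x \<ge> 1/2"
  proof (rule ccontr)
    assume "\<not> x \<ge> 1/2"
    then have "0 \<le> (x - 1/400) * (1/2 - x)" using x_pos by simp
    moreover have "(x - 1/400) * (1/2 - x) = (201/400)*x - x*x - 1/800" by (simp add: field_simps)
    ultimately have f1: "x*x \<le> (201/400)*x - 1/800" by linarith
    have f2: "x * y \<le> (4243/100000) * x" using y x_pos by (simp add: mult_left_mono mult.commute)
    have "x * (1 - x - 2*y) \<le> x * c" using c x_pos by (intro mult_left_mono) auto
    then have f3: "x - x*x - 2*(x*y) \<le> x * c" by (simp add: algebra_simps)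
    have "\<delta>^2 \<le> (3/100)^2" using d by (intro power_mono) auto
    then show False using f1 f2 f3 x_pos xc by (simp add: power2_eq_square; linarith)
  qed
  text \<open>Hence c <= 4 delta^2, and the factor |u - 1| |u + 1| <= c + 2 |tau| is small.\<close>
  have "(1/2) * c \<le> x * c" using x_half by (intro mult_right_mono) (auto simp: c_def)
  then have c_small: "c \<le> 4 * \<delta>^2" using xc by linarith
  have "cmod (u + 1) \<ge> 21/20"
    using norm_triangle_ineq4[of "u + 1" "u - 1"] near by simp
  then have "cmod (u - 1) * (21/20) \<le> cmod (u - 1) * cmod (u + 1)"
    by (intro mult_left_mono) auto
  moreover have "y \<le> (14143/10000) * \<delta>"
    using tau mult_right_mono[OF sqrt2_upper d(1)] by (simp add: y_def)
  moreover have "4 * \<delta>^2 \<le> (3/25) * \<delta>"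
    using mult_right_mono[of \<delta> "3/100" \<delta>] d by (simp add: power2_eq_square)
  ultimately show ?thesis using B(2) c_small d by (simp add: c_def y_def; linarith)
qed

lemma almost_idem_scalar_bounds:
  fixes X :: cmat2 and \<delta> :: real
  assumes R: "norm (X ** X - X) \<le> \<delta>"
  defines "u \<equiv> trace X - 1" and "\<tau> \<equiv> trace (X ** X - X)"
  shows "cmod \<tau> \<le> sqrt 2 * \<delta>" and "cmod (u^2 * (1 - u^2 + 2*\<tau>)) \<le> 2 * \<delta>^2"
proof -
  have "cmod \<tau> \<le> sqrt 2 * norm (X ** X - X)" by (simp add: \<tau>_def cmod_trace_le)
  also have "\<dots> \<le> sqrt 2 * \<delta>" using R by (rule mult_left_mono) simp
  finally show "cmod \<tau> \<le> sqrt 2 * \<delta>" .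
  have "(norm (X ** X - X))^2 \<le> \<delta>^2" using R by (intro power_mono) auto
  then show "cmod (u^2 * (1 - u^2 + 2*\<tau>)) \<le> 2 * \<delta>^2"
    using cmod_discriminant_le[of "X ** X - X"] defect_discriminant[of X]
    by (simp add: u_def \<tau>_def)
qed

lemma almost_idem_trace_cases:
  fixes X :: cmat2 and \<delta> :: real
  assumes d: "0 \<le> \<delta>" "\<delta> < 3/100" and R: "norm (X ** X - X) \<le> \<delta>"
  shows "cmod (trace X) < 19/20 \<or> cmod (trace X - 1) < 19/20 \<or> cmod (trace X - 2) < 19/20"
  using scalar_trichotomy[OF d almost_idem_scalar_bounds[OF R]]
  by (simp add: algebra_simps)

text \<open>If the trace is near 2, the matrix is near the identity: by Cayley-Hamilton
  u (X - I) = R + q I with u = tr X - 1 close to 1 and q = det X - tr X + 1 of order delta.\<close>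

lemma almost_idem_near_identity:
  fixes X :: cmat2 and \<delta> :: real
  assumes d: "0 \<le> \<delta>" "\<delta> < 3/100" and R: "norm (X ** X - X) \<le> \<delta>"
    and t2: "cmod (trace X - 2) < 19/20"
  shows "norm (X - mat 1) \<le> 5 * \<delta>"
proof -
  define u where "u = trace X - 1"
  define \<tau> where "\<tau> = trace (X ** X - X)"
  define q where "q = det2 X - trace X + 1"
  note B = almost_idem_scalar_bounds[OF R, folded u_def \<tau>_def]
  have u1: "cmod (u - 1) \<le> 57/20 * \<delta>"
    using scalar_root_near_one[OF d B] t2 by (simp add: u_def algebra_simps)
  then have u1': "cmod (u - 1) \<le> 171/2000" using d by linarith
  have tau: "cmod \<tau> \<le> 14143/10000 * \<delta>"
    using B(1) mult_right_mono[OF sqrt2_upper d(1)] by linarith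
  have "2 * q = (u - 1)^2 + (u - 1) - \<tau>"
    unfolding q_def u_def \<tau>_def by (rule defect_constant_term)
  then have "2 * cmod q = cmod ((u - 1)^2 + (u - 1) - \<tau>)"
    by (metis norm_mult norm_numeral)
  also have "\<dots> \<le> cmod (u - 1) * cmod (u - 1) + cmod (u - 1) + cmod \<tau>"
    using norm_triangle_ineq4[of "(u-1)^2 + (u-1)" \<tau>] norm_triangle_ineq[of "(u-1)^2" "u-1"]
    by (simp add: norm_mult power2_eq_square)
  also have "cmod (u - 1) * cmod (u - 1) \<le> (171/2000) * (57/20 * \<delta>)"
    using u1 u1' by (intro mult_mono) auto
  finally have q: "cmod q \<le> 2254/1000 * \<delta>" using u1 tau d by linarith
  have "cmod u \<ge> 1829/2000" using norm_triangle_ineq4[of u "u - 1"] u1' by simp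
  then have "(1829/2000) * norm (X - mat 1) \<le> cmod u * norm (X - mat 1)"
    by (rule mult_right_mono) simp
  also have "\<dots> = norm (X ** X - X + mat q)"
    unfolding q_def u_def by (rule norm_cmat2_entrywise_scale[symmetric]) (rule defect_cayley_hamilton)
  also have "\<dots> \<le> norm (X ** X - X) + sqrt 2 * cmod q"
    using norm_triangle_ineq[of "X ** X - X" "mat q"] by (simp add: norm_cmat2_scalar)
  also have "sqrt 2 * cmod q \<le> 14143/10000 * cmod q" using sqrt2_upper by (rule mult_right_mono) simp
  finally show ?thesis using R q d by linarith
qed

text \<open>The symmetry X \<mapsto> I - X preserves the defect and exchanges traces near 0 and near 2.\<close>

lemma almost_idem_near_zero:
  fixes X :: cmat2 and \<delta> :: real
  assumes d: "0 \<le> \<delta>" "\<delta> < 3/100" and R: "norm (X ** X - X) \<le> \<delta>"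
    and t0: "cmod (trace X) < 19/20"
  shows "norm X \<le> 5 * \<delta>"
proof -
  have "(mat 1 - X) ** (mat 1 - X) - (mat 1 - X) = X ** X - X"
    unfolding cmat2_eq_iff by (simp add: cmat2_mult_entry cmat2_mat_entry algebra_simps)
  then have R': "norm ((mat 1 - X) ** (mat 1 - X) - (mat 1 - X)) \<le> \<delta>" using R by (simp only:)
  have "trace (mat 1 - X) - 2 = - trace X" by (simp add: cmat2_trace cmat2_mat_entry)
  then have t2: "cmod (trace (mat 1 - X) - 2) < 19/20" using t0 by simp
  have "norm ((mat 1 - X) - mat 1) \<le> 5 * \<delta>" by (rule almost_idem_near_identity[OF d R' t2])
  then show ?thesis by simp
qed

text \<open>Rank-one idempotents.  Among 2x2 idempotents, 0 and I have ranks 0 and 2, so a rank-one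
  idempotent has trace 1 and determinant 0.\<close>

lemma rank_zero_cmat2: "rank (0::cmat2) = 0"
proof -
  have "rows (0::cmat2) = {0}" by (auto simp: rows_def row_def vec_eq_iff)
  moreover have "vec.dim {0::complex^2} = 0"
    by (metis vec.dim_span vec.span_insert_0 vec.dim_empty)
  ultimately show ?thesis by (simp add: row_rank_def_gen)
qed

lemma rank_identity_cmat2: "rank (mat 1::cmat2) = 2"
proof -
  have "rows (mat 1::cmat2) = cart_basis"
    by (auto simp: rows_def row_def cart_basis_def vec_eq_iff mat_def axis_def)
  then show ?thesis
    by (simp add: row_rank_def_gen vec.dim_eq_card_independent[OF independent_cart_basis]
        card_cart_basis)
qed

lemma rank_one_idempotent_trace_det:
  fixes P :: cmat2
  assumes PP: "P ** P = P" and rk: "rank P = 1"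
  shows "trace P = 1" "det2 P = 0"
proof -
  define a where "a = P$1$1"
  define b where "b = P$1$2"
  define c where "c = P$2$1"
  define d where "d = P$2$2"
  have E: "a*a + b*c = a" "a*b + b*d = b" "c*a + d*c = c" "c*b + d*d = d"
    using PP unfolding cmat2_eq_iff by (auto simp: cmat2_mult_entry a_def b_def c_def d_def)
  have nz: "P \<noteq> 0" using rk rank_zero_cmat2 by auto
  have ni: "P \<noteq> mat 1" using rk rank_identity_cmat2 by auto
  text \<open>Every entry is annihilated by (tr P - 1), up to the determinant.\<close>
  have e1: "(a + d - 1) * b = 0" "(a + d - 1) * c = 0" using E(2,3) by (simp_all add: algebra_simps)
  have e2: "(a + d - 1) * a = a*d - b*c" "(a + d - 1) * d = a*d - b*c"
    using E(1,4) by (simp_all add: algebra_simps)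
  have det0: "a*d - b*c = 0"
  proof (rule ccontr)
    assume H: "a*d - b*c \<noteq> 0"
    then have "a + d - 1 \<noteq> 0" using e2 by auto
    then have "b = 0" "c = 0" using e1 by auto
    with E have "a*a = a" "d*d = d" by auto
    moreover have "a \<noteq> 0" "d \<noteq> 0" using H \<open>b = 0\<close> by auto
    ultimately have "a = 1" "d = 1" by (metis mult_cancel_right1 mult.commute)+
    then have "P = mat 1" using \<open>b = 0\<close> \<open>c = 0\<close>
      unfolding cmat2_eq_iff by (simp add: a_def b_def c_def d_def mat_def)
    with ni show False by simp
  qed
  then show "det2 P = 0" by (simp add: det2_def a_def b_def c_def d_def)
  have "a \<noteq> 0 \<or> b \<noteq> 0 \<or> c \<noteq> 0 \<or> d \<noteq> 0"
    using nz unfolding cmat2_eq_iff by (auto simp: a_def b_def c_def d_def)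
  then have "a + d - 1 = 0" using e1 e2 det0 by auto
  then show "trace P = 1" by (simp add: cmat2_trace a_def d_def)
qed

lemma trace_one_det_zero_complement:
  fixes Q :: cmat2
  assumes "trace Q = 1" and "det2 Q = 0"
  shows "trace (mat 1 - Q) = 1" "det2 (mat 1 - Q) = 0"
  using assms by (simp_all add: cmat2_trace det2_def cmat2_mat_entry algebra_simps)

lemma trace_one_det_zero_norms:
  fixes Q :: cmat2
  assumes tQ: "trace Q = 1" and dQ: "det2 Q = 0"
  shows "norm Q \<ge> 1" "norm (mat 1 - Q) = norm Q" "norm (mat 1 - Q - Q) \<ge> sqrt 2 * norm Q"
proof -
  define a where "a = Q$1$1"
  define b where "b = Q$1$2"
  define c where "c = Q$2$1"
  define d where "d = Q$2$2"
  have ad: "a + d = 1" using tQ by (simp add: cmat2_trace a_def d_def)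
  have re: "Re a + Re d = 1" using arg_cong[OF ad, of Re] by simp
  have im: "Im a + Im d = 0" using arg_cong[OF ad, of Im] by simp
  have ns: "(norm Q)^2 = (cmod a)^2 + (cmod b)^2 + (cmod c)^2 + (cmod d)^2"
    by (simp add: cmat2_norm_sq a_def b_def c_def d_def)
  have "cmod b * cmod c = cmod a * cmod d"
    using dQ by (simp add: det2_def a_def b_def c_def d_def flip: norm_mult)
  moreover have "1 \<le> (cmod a + cmod d)^2"
  proof -
    have "1 \<le> cmod a + cmod d" using norm_triangle_ineq[of a d] ad by simp
    then show ?thesis by (metis one_le_power)
  qed
  moreover have "0 \<le> (cmod b - cmod c)^2" by simp
  ultimately have sq1: "1 \<le> (norm Q)^2" unfolding ns by (simp add: power2_eq_square algebra_simps)
  then show "norm Q \<ge> 1"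
    by (metis abs_norm_cancel one_le_power power2_le_imp_le norm_ge_zero one_power2)
  have "(norm (mat 1 - Q))^2 = (norm Q)^2"
    unfolding ns cmat2_norm_sq cmod_power2 using re im
    by (simp add: cmat2_mat_entry a_def b_def c_def d_def power2_eq_square algebra_simps)
  then show "norm (mat 1 - Q) = norm Q" by (simp add: power2_eq_iff_nonneg)
  have "(norm (mat 1 - Q - Q))^2 = 4 * (norm Q)^2 - 2"
    unfolding ns cmat2_norm_sq cmod_power2 using re im
    by (simp add: cmat2_mat_entry a_def b_def c_def d_def power2_eq_square algebra_simps)
  also have "\<dots> \<ge> (sqrt 2 * norm Q)^2" using sq1 by (simp add: power_mult_distrib)
  finally show "norm (mat 1 - Q - Q) \<ge> sqrt 2 * norm Q"
    by (rule power2_le_imp_le) simp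
qed

lemma near_identity_factor:
  fixes A F G :: cmat2 and \<epsilon> \<delta> :: real
  assumes A: "norm (A - mat 1) \<le> \<epsilon>" and AF: "norm (A ** F - G) \<le> \<delta>"
  shows "norm (G - F) \<le> \<delta> + \<epsilon> * norm F"
proof -
  have "A ** F - F = (A - mat 1) ** F"
    unfolding cmat2_eq_iff by (simp add: cmat2_mult_entry cmat2_mat_entry algebra_simps)
  then have "norm (A ** F - F) \<le> \<epsilon> * norm F"
    using norm_cmat2_mult_le[of "A - mat 1" F] mult_right_mono[OF A norm_ge_zero[of F]] by simp
  moreover have "norm (G - F) \<le> norm (A ** F - F) + norm (A ** F - G)"
    using norm_triangle_ineq4[of "A ** F - F" "A ** F - G"] by simp
  ultimately show ?thesis using AF by linarith
qed

text \<open>G cannot be near 0, since F has norm close to |Q| >= 1.\<close>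

lemma product_not_near_zero:
  fixes F G Q :: cmat2 and \<delta> :: real
  assumes d: "0 \<le> \<delta>" "\<delta> < 3/100" and GF: "norm (G - F) \<le> \<delta> + 5 * \<delta> * norm F"
    and FQ: "norm (F - Q) \<le> 12 * \<delta>" and Q: "1 \<le> norm Q" and G: "norm G \<le> 5 * \<delta>"
  shows False
proof -
  have "norm F \<le> norm G + norm (G - F)" using norm_triangle_ineq2[of F G] by (simp add: norm_minus_commute)
  moreover have "norm Q \<le> norm F + norm (F - Q)" using norm_triangle_ineq2[of Q F] by (simp add: norm_minus_commute)
  moreover have "\<delta> * norm F \<le> 3/100 * norm F" using d by (intro mult_right_mono) auto
  ultimately show False using GF FQ Q G d by linarith
qed

text \<open>G cannot be near I: then F - I = (FG - G) + (G - I) - F (G - I) would be small,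
  whereas |F - I| >= |I - Q| - 12 delta >= 1 - 12 delta.\<close>

lemma product_not_near_identity:
  fixes F G Q :: cmat2 and \<delta> :: real
  assumes d: "0 \<le> \<delta>" "\<delta> < 3/100" and FG: "norm (F ** G - G) \<le> \<delta>"
    and G: "norm (G - mat 1) \<le> 5 * \<delta>" and FQ: "norm (F - Q) \<le> 12 * \<delta>"
    and Q: "1 \<le> norm (mat 1 - Q)"
  shows False
proof -
  define m where "m = norm (F - mat 1)"
  have split: "F - mat 1 = (F ** G - G) + (G - mat 1) - F ** (G - mat 1)"
    unfolding cmat2_eq_iff by (simp add: cmat2_mult_entry cmat2_mat_entry algebra_simps)
  have "norm ((F ** G - G) + (G - mat 1) - F ** (G - mat 1))
      \<le> norm ((F ** G - G) + (G - mat 1)) + norm (F ** (G - mat 1))"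
    by (rule norm_triangle_ineq4)
  moreover have "norm ((F ** G - G) + (G - mat 1)) \<le> norm (F ** G - G) + norm (G - mat 1)"
    by (rule norm_triangle_ineq)
  ultimately have "m \<le> norm (F ** G - G) + norm (G - mat 1) + norm (F ** (G - mat 1))"
    unfolding m_def split by linarith
  moreover have "norm (F ** (G - mat 1)) \<le> 5 * (\<delta> * norm F)"
  proof -
    have "norm F * norm (G - mat 1) \<le> norm F * (5 * \<delta>)" using G by (rule mult_left_mono) simp
    then show ?thesis using norm_cmat2_mult_le[of F "G - mat 1"] by (simp add: mult_ac)
  qed
  moreover have "norm F \<le> m + sqrt 2"
    using norm_triangle_ineq[of "F - mat 1" "mat 1"] by (simp add: m_def norm_cmat2_scalar)
  then have "\<delta> * norm F \<le> \<delta> * (m + sqrt 2)" using d(1) by (rule mult_left_mono)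
  then have "\<delta> * norm F \<le> \<delta> * m + \<delta> * sqrt 2" by (simp add: distrib_left)
  moreover have "norm (mat 1 - Q) \<le> m + 12 * \<delta>"
    using norm_triangle_ineq[of "mat 1 - F" "F - Q"] FQ by (simp add: m_def norm_minus_commute)
  moreover have "\<delta> * m \<le> 3/100 * m" using d by (intro mult_right_mono) (auto simp: m_def)
  moreover have "\<delta> * sqrt 2 \<le> \<delta> * (14143/10000)" using d sqrt2_upper by (intro mult_left_mono) auto
  ultimately show False using FG G Q d by linarith
qed

text \<open>G cannot be near I - Q, because Q and I - Q are at distance >= sqrt 2 |Q|.\<close>

lemma product_not_near_complement:
  fixes F G Q :: cmat2 and \<delta> :: real
  assumes d: "0 \<le> \<delta>" "\<delta> < 3/100" and GF: "norm (G - F) \<le> \<delta> + 5 * \<delta> * norm F"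
    and FQ: "norm (F - Q) \<le> 12 * \<delta>" and GQ: "norm ((mat 1 - Q) - G) \<le> 12 * \<delta>"
    and Q: "1 \<le> norm Q" and sep: "sqrt 2 * norm Q \<le> norm (mat 1 - Q - Q)"
  shows False
proof -
  have split: "mat 1 - Q - Q = ((mat 1 - Q) - G) + (G - F) + (F - Q)" by simp
  have "norm (((mat 1 - Q) - G) + (G - F) + (F - Q))
      \<le> norm (((mat 1 - Q) - G) + (G - F)) + norm (F - Q)"
    by (rule norm_triangle_ineq)
  moreover have "norm (((mat 1 - Q) - G) + (G - F)) \<le> norm ((mat 1 - Q) - G) + norm (G - F)"
    by (rule norm_triangle_ineq)
  ultimately have "norm (mat 1 - Q - Q) \<le> norm ((mat 1 - Q) - G) + norm (G - F) + norm (F - Q)"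
    by (simp only: split[symmetric]; linarith)
  moreover have "norm F \<le> norm Q + 12 * \<delta>"
    using norm_triangle_ineq[of "F - Q" Q] FQ by simp
  then have "\<delta> * norm F \<le> \<delta> * (norm Q + 12 * \<delta>)" using d by (intro mult_left_mono) auto
  moreover have "14142/10000 * norm Q \<le> sqrt 2 * norm Q" using sqrt2_lower Q by (intro mult_right_mono) auto
  moreover have "\<delta> * \<delta> \<le> 3/100 * \<delta>" using d by (intro mult_right_mono) auto
  moreover have "\<delta> * norm Q \<le> 3/100 * norm Q" using d Q by (intro mult_right_mono) auto
  ultimately show False using GF FQ GQ Q sep d by (simp add: algebra_simps; linarith)
qed

text \<open>The key step, stated for an arbitrary trace-one, determinant-zero Q so that it applies to
  both P and I - P: if theta(e) has trace near 2 and theta(f) is within 12 delta of Q, then so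
  is theta(ef).  The element G = theta(ef) is almost idempotent, and of the possible positions
  of G only the ball around Q survives.\<close>

lemma near_identity_mult_preserves_ball:
  fixes \<theta> :: "'a::ab_semigroup_mult \<Rightarrow> cmat2" and \<delta> :: real and Q :: cmat2 and e f :: 'a
  assumes idem: "\<And>x::'a. x * x = x"
    and d: "0 \<le> \<delta>" "\<delta> < 3/100"
    and approx: "\<And>x y. norm (\<theta> x ** \<theta> y - \<theta> (x * y)) \<le> \<delta>"
    and tQ: "trace Q = 1" and dQ: "det2 Q = 0"
    and S1: "\<And>x. cmod (trace (\<theta> x) - 1) < 19/20 \<Longrightarrow>
               norm (Q - \<theta> x) \<le> 12 * \<delta> \<or> norm ((mat 1 - Q) - \<theta> x) \<le> 12 * \<delta>"
    and e: "cmod (trace (\<theta> e) - 2) < 19/20"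
    and f: "norm (Q - \<theta> f) \<le> 12 * \<delta>"
  shows "norm (Q - \<theta> (e * f)) \<le> 12 * \<delta>"
proof -
  define F where "F = \<theta> f"
  define G where "G = \<theta> (e * f)"
  note Q = trace_one_det_zero_norms[OF tQ dQ]
  have almost_idem: "norm (\<theta> x ** \<theta> x - \<theta> x) \<le> \<delta>" for x
    using approx[of x x] by (simp add: idem)
  have A: "norm (\<theta> e - mat 1) \<le> 5 * \<delta>" by (rule almost_idem_near_identity[OF d almost_idem e])
  have GF: "norm (G - F) \<le> \<delta> + 5 * \<delta> * norm F"
    unfolding F_def G_def by (rule near_identity_factor[OF A approx])
  have FQ: "norm (F - Q) \<le> 12 * \<delta>" using f by (simp add: F_def norm_minus_commute)
  have "f * (e * f) = e * f" by (metis idem mult.left_commute)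
  then have FG: "norm (F ** G - G) \<le> \<delta>" using approx[of f "e * f"] by (simp add: F_def G_def)
  have GG: "norm (G ** G - G) \<le> \<delta>" by (simp add: G_def almost_idem)
  consider "cmod (trace G) < 19/20" | "cmod (trace G - 1) < 19/20" | "cmod (trace G - 2) < 19/20"
    using almost_idem_trace_cases[OF d GG] by blast
  then show ?thesis
  proof cases
    case 1
    with almost_idem_near_zero[OF d GG] product_not_near_zero[OF d GF FQ Q(1)]
    show ?thesis by blast
  next
    case 2
    with S1[of "e * f"] product_not_near_complement[OF d GF FQ _ Q(1) Q(3)]
    show ?thesis by (auto simp: G_def)
  next
    case 3
    with almost_idem_near_identity[OF d GG] product_not_near_identity[OF d FG _ FQ] Q(1,2)
    show ?thesis by auto
  qed
qed

theorem propositionp: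
  fixes \<theta> :: "'a::ab_semigroup_mult \<Rightarrow> cmat2" and \<delta> :: real and P :: cmat2 and e f :: 'a
  assumes idem: "\<And>x::'a. x * x = x"
    and delta: "0 \<le> \<delta>" "\<delta> < 0.03"
    and approx: "\<And>x y. hs_norm (\<theta> x ** \<theta> y - \<theta> (x * y)) \<le> \<delta>"
    and P_idem: "P ** P = P" and P_rank: "rank P = 1"
    and S1: "\<theta> ` Sk \<theta> 1 \<subseteq> closed_hs_ball P (12 * \<delta>) \<union> closed_hs_ball (mat 1 - P) (12 * \<delta>)"
    and e: "e \<in> Sk \<theta> 2"
  shows "(f \<in> \<theta> -` closed_hs_ball P (12 * \<delta>) \<longrightarrow> e * f \<in> \<theta> -` closed_hs_ball P (12 * \<delta>))
       \<and> (f \<in> \<theta> -` closed_hs_ball (mat 1 - P) (12 * \<delta>) \<longrightarrow> e * f \<in> \<theta> -` closed_hs_ball (mat 1 - P) (12 * \<delta>))"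
proof -
  have d: "0 \<le> \<delta>" "\<delta> < 3/100" using delta by simp_all
  have approx': "\<And>x y. norm (\<theta> x ** \<theta> y - \<theta> (x * y)) \<le> \<delta>"
    using approx by (simp add: hs_norm_eq_norm)
  have e': "cmod (trace (\<theta> e) - 2) < 19/20" using e by (simp add: Sk_def)
  have S1': "norm (P - \<theta> x) \<le> 12 * \<delta> \<or> norm ((mat 1 - P) - \<theta> x) \<le> 12 * \<delta>"
    if "cmod (trace (\<theta> x) - 1) < 19/20" for x
    using S1 that by (force simp: Sk_def closed_hs_ball_def hs_norm_eq_norm)
  note P = rank_one_idempotent_trace_det[OF P_idem P_rank]
  note P' = trace_one_det_zero_complement[OF P]
  show ?thesis
    unfolding closed_hs_ball_def vimage_def hs_norm_eq_norm mem_Collect_eq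
  proof (intro conjI impI)
    show "norm (P - \<theta> (e * f)) \<le> 12 * \<delta>" if "norm (P - \<theta> f) \<le> 12 * \<delta>"
      using near_identity_mult_preserves_ball[OF idem d approx' P S1' e' that] .
    show "norm (mat 1 - P - \<theta> (e * f)) \<le> 12 * \<delta>" if "norm (mat 1 - P - \<theta> f) \<le> 12 * \<delta>"
      using near_identity_mult_preserves_ball[OF idem d approx' P', of e f] S1' e' that by auto
  qed
qed

end
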